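(* For any constant $\varepsilon\in(0,\eta)$, let $c_\varepsilon=\min\{2\eta-2\varepsilon,1\}$. Then the set $E_{c_\varepsilon}=\{(x_1,\dots,x_n)\in[0,1]^n:\max_{i,j\in\mathcal V}|x_i-x_j|\ge c_\varepsilon\}$ is finite-time robustly reachable from $[0,1]^n$ under both control protocols (C1) and (C3).
   Context: Fix $n\ge3$, $\mathcal V=\{1,\dots,n\}$, confidence thresholds $r_i\in(0,1]$, belief factors $\omega_i\in(0,1)$, $\eta>0$. States $x(t)\in[0,1]^n$. Neighbor set $\mathcal N_i(t)=\{j:|x_j(t)-x_i(t)|\le r_i\}$ (contains $i$), $\Pi_{[0,1]}(y)=\min\{1,\max\{0,y\}\}$, $x_{\rm ave}(t)=\frac1n\sum_ix_i(t)$. Control protocol (C1): $x_i(t+1)=\Pi_{[0,1]}\big(|\mathcal N_i(t)|^{-1}\sum_{j\in\mathcal N_i(t)}x_j(t)+u_i(t)+b_i(t)\big)$. Control protocol (C3): $x_i(t+1)=\Pi_{[0,1]}\big(\omega_ix_{\rm ave}(t)+\frac{1-\omega_i}{|\mathcal N_i(t)|}\sum_{j\in\mathcal N_i(t)}x_j(t)+u_i(t)+b_i(t)\big)$. Here $\delta_i(t)\in(0,\eta)$ is a chosen parameter, $u_i(t)\in[-\eta+\delta_i(t),\eta-\delta_i(t)]$ a chosen control input, $b_i(t)\in[-\delta_i(t),\delta_i(t)]$ an arbitrary uncertainty; $\delta_i(t),u_i(t)$ may depend on $x(0),\dots,x(t)$. A set $S\subseteq[0,1]^n$ is finite-time robustly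 reachable from $[0,1]^n$ under a control protocol if there exist constants $T>0$ and $\varepsilon'\in(0,\eta)$, independent of $x(0)$, such that for every $x(0)\in[0,1]^n$, either $x(0)\in S$, or one can choose $\delta_i(t)\in[\varepsilon',\eta)$ and $u_i(t)\in[-\eta+\delta_i(t),\eta-\delta_i(t)]$ for $i\in\mathcal V$, $0\le t<T$, guaranteeing that for arbitrary $b_i(t)\in[-\delta_i(t),\delta_i(t)]$ there is $t\in[1,T]$ with $x(t)\in S$. *)

theory Defs
  imports Complex_Main
begin

text \<open>Agents are indexed by V = {1..n}; a state is a function nat => real,
  of which only the values on {1..n} are relevant.\<close>

definition proj01 :: "real \<Rightarrow> real" where
  "proj01 y = min 1 (max 0 y)"

definition nbr :: "nat \<Rightarrow> (nat \<Rightarrow> real) \<Rightarrow> (nat \<Rightarrow> real) \<Rightarrow> nat \<Rightarrow> nat set" where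
  "nbr n r x i = {j \<in> {1..n}. \<bar>x j - x i\<bar> \<le> r i}"

definition xave :: "nat \<Rightarrow> (nat \<Rightarrow> real) \<Rightarrow> real" where
  "xave n x = (\<Sum>j = 1..n. x j) / real n"

definition stepC1 :: "nat \<Rightarrow> (nat \<Rightarrow> real) \<Rightarrow> (nat \<Rightarrow> real) \<Rightarrow> (nat \<Rightarrow> real) \<Rightarrow> (nat \<Rightarrow> real) \<Rightarrow> (nat \<Rightarrow> real)" where
  "stepC1 n r x u b = (\<lambda>i. proj01 ((\<Sum>j\<in>nbr n r x i. x j) / real (card (nbr n r x i)) + u i + b i))"

definition stepC3 :: "nat \<Rightarrow> (nat \<Rightarrow> real) \<Rightarrow> (nat \<Rightarrow> real) \<Rightarrow> (nat \<Rightarrow> real) \<Rightarrow> (nat \<Rightarrow> real) \<Rightarrow> (nat \<Rightarrow> real) \<Rightarrow> (nat \<Rightarrow> real)" where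
  "stepC3 n r \<omega> x u b = (\<lambda>i. proj01 (\<omega> i * xave n x
      + (1 - \<omega> i) / real (card (nbr n r x i)) * (\<Sum>j\<in>nbr n r x i. x j) + u i + b i))"

fun hist :: "((nat \<Rightarrow> real) \<Rightarrow> (nat \<Rightarrow> real) \<Rightarrow> (nat \<Rightarrow> real) \<Rightarrow> (nat \<Rightarrow> real))
    \<Rightarrow> (nat \<Rightarrow> real) \<Rightarrow> ((nat \<Rightarrow> real) list \<Rightarrow> nat \<Rightarrow> real) \<Rightarrow> (nat \<Rightarrow> nat \<Rightarrow> real)
    \<Rightarrow> nat \<Rightarrow> (nat \<Rightarrow> real) list" where
  "hist F x0 u b 0 = [x0]"
| "hist F x0 u b (Suc t) = (let h = hist F x0 u b t in h @ [F (last h) (u h) (b t)])"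

definition traj where
  "traj F x0 u b t = last (hist F x0 u b t)"

definition unit_cube :: "nat \<Rightarrow> (nat \<Rightarrow> real) set" where
  "unit_cube n = {x. \<forall>i\<in>{1..n}. 0 \<le> x i \<and> x i \<le> 1}"

text \<open>Finite-time robust reachability. delta and u are feedback laws depending on the
  history x(0..t); the admissibility constraints are required at every time t < T
  reached through admissible uncertainties.\<close>
definition robustly_reachable ::
  "nat \<Rightarrow> real \<Rightarrow> ((nat \<Rightarrow> real) \<Rightarrow> (nat \<Rightarrow> real) \<Rightarrow> (nat \<Rightarrow> real) \<Rightarrow> (nat \<Rightarrow> real))
    \<Rightarrow> (nat \<Rightarrow> real) set \<Rightarrow> bool" where
  "robustly_reachable n \<eta> F S \<longleftrightarrow>
    (\<exists>T::nat. T > 0 \<and> (\<exists>\<epsilon>'. 0 < \<epsilon>' \<and> \<epsilon>' < \<eta> \<and>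
      (\<forall>x0 \<in> unit_cube n. x0 \<in> S \<or>
        (\<exists>(\<delta> :: (nat \<Rightarrow> real) list \<Rightarrow> nat \<Rightarrow> real) (u :: (nat \<Rightarrow> real) list \<Rightarrow> nat \<Rightarrow> real).
          (\<forall>b t. t < T \<longrightarrow>
             (\<forall>s<t. \<forall>i\<in>{1..n}. \<bar>b s i\<bar> \<le> \<delta> (hist F x0 u b s) i) \<longrightarrow>
             (\<forall>i\<in>{1..n}. \<epsilon>' \<le> \<delta> (hist F x0 u b t) i \<and> \<delta> (hist F x0 u b t) i < \<eta> \<and>
                \<bar>u (hist F x0 u b t) i\<bar> \<le> \<eta> - \<delta> (hist F x0 u b t) i)) \<and>
          (\<forall>b. (\<forall>t<T. \<forall>i\<in>{1..n}. \<bar>b t i\<bar> \<le> \<delta> (hist F x0 u b t) i) \<longrightarrow>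
             (\<exists>t\<in>{1..T}. traj F x0 u b t \<in> S))))))"

definition Eset :: "nat \<Rightarrow> real \<Rightarrow> (nat \<Rightarrow> real) set" where
  "Eset n c = {x \<in> unit_cube n. Max {\<bar>x i - x j\<bar> | i j. i \<in> {1..n} \<and> j \<in> {1..n}} \<ge> c}"

end

theory Submission
  imports Defs
begin

text \<open>Both protocols are of the form x(t+1) = proj01 (A x(t) + u + b) with an uncontrolled
  update A that maps every box [1/2 - D, 1/2 + D]^n into itself (it averages states).
  Steering every agent towards 1/2 with a control of size P = \<eta> - \<delta> shrinks the radius of
  such a box by P - \<delta> per step, so after K steps all states lie within \<delta> of 1/2.
  One more step with control +P for agent 1 and -P for agent 2 separates them by
  min (2P - 4\<delta>) 1, which is at least min (2\<eta> - 2\<epsilon>) 1 once \<delta> \<le> \<epsilon>/3.\<close>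

lemma proj01_bounds: "0 \<le> proj01 y" "proj01 y \<le> 1"
  unfolding proj01_def by auto

lemma proj01_mono: "y \<le> z \<Longrightarrow> proj01 y \<le> proj01 z"
  unfolding proj01_def by auto

lemma dist_half_proj01_le: "\<bar>proj01 y - 1/2\<bar> \<le> \<bar>y - 1/2\<bar>"
  unfolding proj01_def by (auto simp: min_def max_def abs_if)

lemma proj01_symmetric_gap: "(h::real) \<ge> 1/2 \<Longrightarrow> min (2*h - 1) 1 \<le> proj01 h - proj01 (1 - h)"
  unfolding proj01_def by (auto simp: min_def max_def)

lemma dist_half_steer_step:
  fixes a b D P \<delta> :: real
  assumes "\<bar>a - 1/2\<bar> \<le> D" "\<bar>b\<bar> \<le> \<delta>" "\<delta> < P"
  shows "\<bar>proj01 (a + max (-P) (min P (1/2 - a)) + b) - 1/2\<bar> \<le> max (D - (P - \<delta>)) \<delta>"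
proof -
  have "\<bar>a + max (-P) (min P (1/2 - a)) + b - 1/2\<bar> \<le> max (D - (P - \<delta>)) \<delta>"
    using assms by (auto simp: abs_le_iff le_max_iff_disj min_def max_def)
  with dist_half_proj01_le show ?thesis by (rule order_trans)
qed

lemma proj01_push_apart:
  fixes a1 a2 b1 b2 P \<delta> :: real
  assumes "\<bar>a1 - 1/2\<bar> \<le> \<delta>" "\<bar>a2 - 1/2\<bar> \<le> \<delta>" "\<bar>b1\<bar> \<le> \<delta>" "\<bar>b2\<bar> \<le> \<delta>" "2*\<delta> \<le> P"
  shows "min (2*P - 4*\<delta>) 1 \<le> proj01 (a1 + P + b1) - proj01 (a2 - P + b2)"
proof -
  define h where "h = 1/2 + (P - 2*\<delta>)"
  have "proj01 h \<le> proj01 (a1 + P + b1)"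
    using assms unfolding h_def by (intro proj01_mono) (simp add: abs_le_iff)
  moreover have "proj01 (a2 - P + b2) \<le> proj01 (1 - h)"
    using assms unfolding h_def by (intro proj01_mono) (simp add: abs_le_iff)
  moreover have "min (2*h - 1) 1 \<le> proj01 h - proj01 (1 - h)"
    using assms unfolding h_def by (intro proj01_symmetric_gap) simp
  moreover have "2*h - 1 = 2*P - 4*\<delta>" unfolding h_def by simp
  ultimately show ?thesis by linarith
qed

definition near_half :: "nat \<Rightarrow> real \<Rightarrow> (nat \<Rightarrow> real) \<Rightarrow> bool" where
  "near_half n D x \<longleftrightarrow> (\<forall>j\<in>{1..n}. \<bar>x j - 1/2\<bar> \<le> D)"

definition centre_preserving :: "nat \<Rightarrow> ((nat \<Rightarrow> real) \<Rightarrow> nat \<Rightarrow> real) \<Rightarrow> bool" where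
  "centre_preserving n A \<longleftrightarrow> (\<forall>x D i. near_half n D x \<longrightarrow> i \<in> {1..n} \<longrightarrow> \<bar>A x i - 1/2\<bar> \<le> D)"

lemma near_half_if_unit_cube: "x \<in> unit_cube n \<Longrightarrow> near_half n (1/2) x"
  unfolding unit_cube_def near_half_def by (auto simp: abs_if)

lemma dist_half_mean_le:
  fixes x :: "nat \<Rightarrow> real"
  assumes "finite S" "S \<noteq> {}" "\<forall>j\<in>S. \<bar>x j - 1/2\<bar> \<le> D"
  shows "\<bar>(\<Sum>j\<in>S. x j) / real (card S) - 1/2\<bar> \<le> D"
proof -
  have c: "real (card S) > 0" using assms by (simp add: card_gt_0_iff)
  have "(\<Sum>j\<in>S. x j) \<le> (\<Sum>j\<in>S. 1/2 + D)"
    by (rule sum_mono) (use assms in \<open>auto simp: abs_le_iff\<close>)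
  with c have "(\<Sum>j\<in>S. x j) / real (card S) \<le> 1/2 + D"
    by (simp add: divide_le_eq mult.commute)
  moreover have "(\<Sum>j\<in>S. 1/2 - D) \<le> (\<Sum>j\<in>S. x j)"
    by (rule sum_mono) (use assms in \<open>auto simp: abs_le_iff\<close>)
  with c have "1/2 - D \<le> (\<Sum>j\<in>S. x j) / real (card S)"
    by (simp add: le_divide_eq mult.commute)
  ultimately show ?thesis by (simp add: abs_le_iff)
qed

lemma dist_half_convex_le:
  fixes w a c D :: real
  assumes "0 \<le> w" "w \<le> 1" "\<bar>a - 1/2\<bar> \<le> D" "\<bar>c - 1/2\<bar> \<le> D"
  shows "\<bar>w * a + (1 - w) * c - 1/2\<bar> \<le> D"
proof -
  have "\<bar>w * a + (1 - w) * c - 1/2\<bar> = \<bar>w * (a - 1/2) + (1 - w) * (c - 1/2)\<bar>"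
    by (rule arg_cong[where f = abs]) (simp add: field_simps)
  also have "\<dots> \<le> w * D + (1 - w) * D"
    using assms by (intro abs_triangle_ineq[THEN order_trans] add_mono)
      (simp_all add: abs_mult mult_left_mono)
  also have "\<dots> = D" by (simp add: algebra_simps)
  finally show ?thesis .
qed

lemma dist_half_nbr_mean_le:
  assumes "near_half n D x" "i \<in> {1..n}" "0 < r i"
  shows "\<bar>(\<Sum>j\<in>nbr n r x i. x j) / real (card (nbr n r x i)) - 1/2\<bar> \<le> D"
proof (rule dist_half_mean_le)
  show "finite (nbr n r x i)" "nbr n r x i \<noteq> {}"
    using assms(2,3) unfolding nbr_def by auto
  show "\<forall>j\<in>nbr n r x i. \<bar>x j - 1/2\<bar> \<le> D"
    using assms(1) unfolding nbr_def near_half_def by auto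
qed

lemma dist_half_xave_le:
  assumes "near_half n D x" "n \<ge> 1"
  shows "\<bar>xave n x - 1/2\<bar> \<le> D"
  using dist_half_mean_le[of "{1..n}" x D] assms unfolding xave_def near_half_def by simp

lemma centre_preserving_C1:
  assumes "\<forall>i\<in>{1..n}. 0 < r i"
  shows "centre_preserving n (\<lambda>x i. (\<Sum>j\<in>nbr n r x i. x j) / real (card (nbr n r x i)))"
  using assms dist_half_nbr_mean_le unfolding centre_preserving_def by blast

lemma centre_preserving_C3:
  assumes "\<forall>i\<in>{1..n}. 0 < r i" "\<forall>i\<in>{1..n}. 0 \<le> \<omega> i \<and> \<omega> i \<le> 1" "n \<ge> 1"
  shows "centre_preserving n
    (\<lambda>x i. \<omega> i * xave n x + (1 - \<omega> i) / real (card (nbr n r x i)) * (\<Sum>j\<in>nbr n r x i. x j))"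
  unfolding centre_preserving_def
proof (intro allI impI)
  fix x D i assume x: "near_half n D x" and i: "i \<in> {1..n}"
  have "\<bar>\<omega> i * xave n x + (1 - \<omega> i) * ((\<Sum>j\<in>nbr n r x i. x j) / real (card (nbr n r x i)))
      - 1/2\<bar> \<le> D"
    using assms x i by (intro dist_half_convex_le dist_half_xave_le dist_half_nbr_mean_le) auto
  then show "\<bar>\<omega> i * xave n x + (1 - \<omega> i) / real (card (nbr n r x i)) * (\<Sum>j\<in>nbr n r x i. x j)
      - 1/2\<bar> \<le> D"
    by simp
qed

lemma length_hist: "length (hist F x0 u b t) = Suc t"
  by (induction t) (simp_all add: Let_def)

lemma traj_0: "traj F x0 u b 0 = x0"
  by (simp add: traj_def)

lemma traj_Suc: "traj F x0 u b (Suc t) = F (traj F x0 u b t) (u (hist F x0 u b t)) (b t)"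
  by (simp add: traj_def Let_def)

lemma robustly_reachableI_const_uncertainty:
  assumes "0 < T" "0 < \<delta>" "\<delta> < \<eta>"
    and "\<And>x0. x0 \<in> unit_cube n \<Longrightarrow> x0 \<notin> S \<Longrightarrow> \<exists>u. (\<forall>h i. \<bar>u h i\<bar> \<le> \<eta> - \<delta>) \<and>
           (\<forall>b. (\<forall>t<T. \<forall>i\<in>{1..n}. \<bar>b t i\<bar> \<le> \<delta>) \<longrightarrow> (\<exists>t\<in>{1..T}. traj F x0 u b t \<in> S))"
  shows "robustly_reachable n \<eta> F S"
  unfolding robustly_reachable_def
proof (intro exI[of _ T] conjI exI[of _ \<delta>] ballI)
  fix x0 assume x0: "x0 \<in> unit_cube n"
  show "x0 \<in> S \<or> (\<exists>\<delta>' u.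
          (\<forall>b t. t < T \<longrightarrow> (\<forall>s<t. \<forall>i\<in>{1..n}. \<bar>b s i\<bar> \<le> \<delta>' (hist F x0 u b s) i) \<longrightarrow>
             (\<forall>i\<in>{1..n}. \<delta> \<le> \<delta>' (hist F x0 u b t) i \<and> \<delta>' (hist F x0 u b t) i < \<eta> \<and>
                \<bar>u (hist F x0 u b t) i\<bar> \<le> \<eta> - \<delta>' (hist F x0 u b t) i)) \<and>
          (\<forall>b. (\<forall>t<T. \<forall>i\<in>{1..n}. \<bar>b t i\<bar> \<le> \<delta>' (hist F x0 u b t) i) \<longrightarrow>
             (\<exists>t\<in>{1..T}. traj F x0 u b t \<in> S)))"
  proof (cases "x0 \<in> S")
    case False
    with assms(4)[OF x0] obtain u where "\<forall>h i. \<bar>u h i\<bar> \<le> \<eta> - \<delta>"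
      "\<forall>b. (\<forall>t<T. \<forall>i\<in>{1..n}. \<bar>b t i\<bar> \<le> \<delta>) \<longrightarrow> (\<exists>t\<in>{1..T}. traj F x0 u b t \<in> S)"
      by blast
    with assms(3) show ?thesis by (intro disjI2 exI[of _ "\<lambda>_ _. \<delta>"] exI[of _ u]) auto
  qed simp
qed (use assms in auto)

lemma traj_near_half_steered:
  assumes F: "\<And>x u b. F x u b = (\<lambda>i. proj01 (A x i + u i + b i))"
    and A: "centre_preserving n A"
    and x0: "near_half n D x0"
    and u: "\<And>t i. t < K \<Longrightarrow> u (hist F x0 u b t) i = max (-P) (min P (1/2 - A (traj F x0 u b t) i))"
    and b: "\<And>t i. t < K \<Longrightarrow> i \<in> {1..n} \<Longrightarrow> \<bar>b t i\<bar> \<le> \<delta>"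
    and "\<delta> < P"
  shows "t \<le> K \<Longrightarrow> near_half n (max (D - real t * (P - \<delta>)) \<delta>) (traj F x0 u b t)"
proof (induction t)
  case 0
  with x0 show ?case by (auto simp: traj_0 near_half_def le_max_iff_disj)
next
  case (Suc t)
  then have IH: "near_half n (max (D - real t * (P - \<delta>)) \<delta>) (traj F x0 u b t)" and "t < K"
    by auto
  have "\<bar>traj F x0 u b (Suc t) j - 1/2\<bar> \<le> max (max (D - real t * (P - \<delta>)) \<delta> - (P - \<delta>)) \<delta>"
    if j: "j \<in> {1..n}" for j
    unfolding traj_Suc F[of "traj F x0 u b t"] u[OF \<open>t < K\<close>]
    using A IH j b[OF \<open>t < K\<close> j] \<open>\<delta> < P\<close>
    by (intro dist_half_steer_step) (auto simp: centre_preserving_def)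
  moreover have "max (max (D - real t * (P - \<delta>)) \<delta> - (P - \<delta>)) \<delta> \<le> max (D - real (Suc t) * (P - \<delta>)) \<delta>"
    using \<open>\<delta> < P\<close> by (auto simp: max_def algebra_simps)
  ultimately show ?case unfolding near_half_def by (meson order_trans)
qed

lemma Eset_memI:
  assumes "y \<in> unit_cube n" "i \<in> {1..n}" "j \<in> {1..n}" "c \<le> \<bar>y i - y j\<bar>"
  shows "y \<in> Eset n c"
proof -
  let ?M = "{\<bar>y i - y j\<bar> | i j. i \<in> {1..n} \<and> j \<in> {1..n}}"
  have "?M = (\<lambda>(i, j). \<bar>y i - y j\<bar>) ` ({1..n} \<times> {1..n})" by force
  then have "finite ?M" by simp
  moreover have "\<bar>y i - y j\<bar> \<in> ?M" using assms(2,3) by blast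
  ultimately have "c \<le> Max ?M" using assms(4) by (meson Max_ge order_trans)
  with assms(1) show ?thesis unfolding Eset_def by simp
qed

lemma robustly_reachable_Eset_if_centre_preserving:
  assumes F: "\<And>x u b. F x u b = (\<lambda>i. proj01 (A x i + u i + b i))"
    and A: "centre_preserving n A"
    and "n \<ge> 2" "0 < \<epsilon>" "\<epsilon> < \<eta>"
  shows "robustly_reachable n \<eta> F (Eset n (min (2*\<eta> - 2*\<epsilon>) 1))"
proof -
  define \<delta> where "\<delta> = \<epsilon> / 4"
  define P where "P = \<eta> - \<delta>"
  define K where "K = nat \<lceil>1 / (2 * (P - \<delta>))\<rceil>"
  have "0 < \<delta>" "\<delta> < P" "2*\<delta> \<le> P" "min (2*\<eta> - 2*\<epsilon>) 1 \<le> min (2*P - 4*\<delta>) 1"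
    using assms unfolding \<delta>_def P_def by auto
  have "1 / (2 * (P - \<delta>)) * (P - \<delta>) \<le> real K * (P - \<delta>)"
    unfolding K_def using \<open>\<delta> < P\<close> by (intro mult_right_mono real_nat_ceiling_ge) auto
  moreover have "1 / (2 * (P - \<delta>)) * (P - \<delta>) = 1/2" using \<open>\<delta> < P\<close> by simp
  ultimately have K: "1/2 \<le> real K * (P - \<delta>)" by linarith
  have 12: "(1::nat) \<in> {1..n}" "(2::nat) \<in> {1..n}" using \<open>n \<ge> 2\<close> by auto
  define u :: "(nat \<Rightarrow> real) list \<Rightarrow> nat \<Rightarrow> real" where
    "u = (\<lambda>h i. if length h \<le> K then max (-P) (min P (1/2 - A (last h) i))
              else if i = 1 then P else if i = 2 then -P else 0)"
  show ?thesis
  proof (rule robustly_reachableI_const_uncertainty[of "Suc K" \<delta>])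
    fix x0 assume x0: "x0 \<in> unit_cube n"
    have "\<bar>u h i\<bar> \<le> \<eta> - \<delta>" for h i
      using \<open>0 < \<delta>\<close> \<open>\<delta> < P\<close> unfolding u_def P_def by (auto simp: abs_le_iff)
    moreover have "\<exists>t\<in>{1..Suc K}. traj F x0 u b t \<in> Eset n (min (2*\<eta> - 2*\<epsilon>) 1)"
      if b: "\<forall>t<Suc K. \<forall>i\<in>{1..n}. \<bar>b t i\<bar> \<le> \<delta>" for b
    proof
      have u_hist: "u (hist F x0 u b t) = (\<lambda>i. if t < K then max (-P) (min P (1/2 - A (traj F x0 u b t) i))
              else if i = 1 then P else if i = 2 then -P else 0)" for t
        unfolding u_def length_hist traj_def by auto
      have "near_half n (max (1/2 - real K * (P - \<delta>)) \<delta>) (traj F x0 u b K)"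
        using F A near_half_if_unit_cube[OF x0] b \<open>\<delta> < P\<close>
        by (intro traj_near_half_steered[where u = u]) (auto simp: u_hist)
      then have xK: "near_half n \<delta> (traj F x0 u b K)" using K \<open>0 < \<delta>\<close> by simp
      let ?y = "traj F x0 u b (Suc K)"
      have "min (2*P - 4*\<delta>) 1 \<le> ?y 1 - ?y 2"
        unfolding traj_Suc F[of "traj F x0 u b K"] u_hist using A xK 12 b \<open>2*\<delta> \<le> P\<close>
        by (simp, intro proj01_push_apart) (auto simp: centre_preserving_def)
      moreover have "?y \<in> unit_cube n"
        unfolding traj_Suc F unit_cube_def by (simp add: proj01_bounds)
      ultimately show "?y \<in> Eset n (min (2*\<eta> - 2*\<epsilon>) 1)"
        using 12 \<open>min (2*\<eta> - 2*\<epsilon>) 1 \<le> min (2*P - 4*\<delta>) 1\<close> by (intro Eset_memI[where i = 1 and j = 2]) auto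
    qed simp
    ultimately show "\<exists>u. (\<forall>h i. \<bar>u h i\<bar> \<le> \<eta> - \<delta>) \<and>
        (\<forall>b. (\<forall>t<Suc K. \<forall>i\<in>{1..n}. \<bar>b t i\<bar> \<le> \<delta>) \<longrightarrow>
           (\<exists>t\<in>{1..Suc K}. traj F x0 u b t \<in> Eset n (min (2*\<eta> - 2*\<epsilon>) 1)))"
      by blast
  qed (use \<open>0 < \<delta>\<close> assms in \<open>auto simp: \<delta>_def\<close>)
qed

theorem lemma4:
  fixes n :: nat and r \<omega> :: "nat \<Rightarrow> real" and \<eta> \<epsilon> :: real
  assumes "n \<ge> 3"
    and "\<forall>i\<in>{1..n}. 0 < r i \<and> r i \<le> 1"
    and "\<forall>i\<in>{1..n}. 0 < \<omega> i \<and> \<omega> i < 1"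
    and "\<eta> > 0"
    and "0 < \<epsilon>" and "\<epsilon> < \<eta>"
  shows "robustly_reachable n \<eta> (stepC1 n r) (Eset n (min (2*\<eta> - 2*\<epsilon>) 1))
       \<and> robustly_reachable n \<eta> (stepC3 n r \<omega>) (Eset n (min (2*\<eta> - 2*\<epsilon>) 1))"
proof
  show "robustly_reachable n \<eta> (stepC1 n r) (Eset n (min (2*\<eta> - 2*\<epsilon>) 1))"
    using assms centre_preserving_C1[of n r]
    by (intro robustly_reachable_Eset_if_centre_preserving) (auto simp: stepC1_def)
  show "robustly_reachable n \<eta> (stepC3 n r \<omega>) (Eset n (min (2*\<eta> - 2*\<epsilon>) 1))"
    using assms centre_preserving_C3[of n r \<omega>] less_imp_le
    by (intro robustly_reachable_Eset_if_centre_preserving) (auto simp: stepC3_def)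
qed

end
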